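(* Let $\gamma(s)$ be an arc-length parametrized triharmonic Frenet helix immersed in a BCV space $M(a,b)$ with $4a\neq b^2$. If the torsion of $\gamma$ is not zero, then $\gamma$ is a geodesic of a suitable Hopf cylinder.
   Context: For real $a,b$, the BCV space $M(a,b)$ is $\{(x,y,z)\in\mathbb{R}^3:\lambda_a=1+a(x^2+y^2)>0\}$ with the metric $$g_{a,b}=\frac{dx^2+dy^2}{[1+a(x^2+y^2)]^2}+\left(dz+\frac{b}{2}\,\frac{y\,dx-x\,dy}{1+a(x^2+y^2)}\right)^2.$$ The vector field $E_3=\partial_z$ is a Killing field whose flow is $\psi_t(x,y,z)=(x,y,z+t)$. A Hopf cylinder is a surface invariant under this flow, parametrized as $\mathbf{x}(s,t)=\psi_t(\widetilde\alpha(s))$ with $\widetilde\alpha$ an arc-length parametrized curve orthogonal to $E_3$. An arc-length parametrized curve $\gamma$ with $T=\gamma'$ is triharmonic if $\nabla_T^5T+R(\nabla_T^3T,T)T-R(\nabla_T^2T,\nabla_TT)T=0$, where $\nabla$ is the Levi-Civita connection and $R(X,Y)=\nabla_X\nabla_Y-\nabla_Y\nabla_X-\nabla_{[X,Y]}$. A Frenet helix is a non-geodesic curve with constant curvature $\kappa$ and constant torsion $\tau$, defined by $\nabla_TT=\kappa N$, $\nabla_TN=-\kappa T+\tau B$, $\nabla_TB=-\tau N$. *)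

theory Defs
  imports "HOL-Analysis.Analysis"
begin

text \<open>BCV space M(a,b): points of R^3 (coordinates x = p$1, y = p$2, z = p$3)
  with 1 + a(x^2+y^2) > 0.\<close>

type_synonym pt = "real^3"

definition lam :: "real \<Rightarrow> pt \<Rightarrow> real" where
  "lam a p = 1 + a * ((p$1)^2 + (p$2)^2)"

definition bcv_dom :: "real \<Rightarrow> pt set" where
  "bcv_dom a = {p. lam a p > 0}"

text \<open>The contact-type one-form  dz + (b/2)(y dx - x dy)/lambda  evaluated on u.\<close>
definition theta :: "real \<Rightarrow> real \<Rightarrow> pt \<Rightarrow> pt \<Rightarrow> real" where
  "theta a b p u = u$3 + (b/2) * (p$2 * u$1 - p$1 * u$2) / lam a p"

definition gm :: "real \<Rightarrow> real \<Rightarrow> pt \<Rightarrow> pt \<Rightarrow> pt \<Rightarrow> real" where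
  "gm a b p u v = (u$1 * v$1 + u$2 * v$2) / (lam a p)^2 + theta a b p u * theta a b p v"

definition E3 :: pt where "E3 = axis 3 1"

definition pd :: "(pt \<Rightarrow> real) \<Rightarrow> pt \<Rightarrow> 3 \<Rightarrow> real" where
  "pd f p i = deriv (\<lambda>h. f (p + h *\<^sub>R axis i 1)) 0"

definition gc :: "real \<Rightarrow> real \<Rightarrow> 3 \<Rightarrow> 3 \<Rightarrow> pt \<Rightarrow> real" where
  "gc a b i j p = gm a b p (axis i 1) (axis j 1)"

definition gmat :: "real \<Rightarrow> real \<Rightarrow> pt \<Rightarrow> real^3^3" where
  "gmat a b p = (\<chi> i j. gc a b i j p)"

definition chr :: "real \<Rightarrow> real \<Rightarrow> 3 \<Rightarrow> 3 \<Rightarrow> 3 \<Rightarrow> pt \<Rightarrow> real" where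
  "chr a b k i j p = (1/2) * (\<Sum>l\<in>UNIV. (matrix_inv (gmat a b p))$k$l *
      (pd (gc a b j l) p i + pd (gc a b i l) p j - pd (gc a b i j) p l))"

definition conn :: "real \<Rightarrow> real \<Rightarrow> pt \<Rightarrow> pt \<Rightarrow> pt \<Rightarrow> pt" where
  "conn a b p X Y = (\<chi> k. \<Sum>i\<in>UNIV. \<Sum>j\<in>UNIV. chr a b k i j p * X$i * Y$j)"

definition vel :: "(real \<Rightarrow> pt) \<Rightarrow> real \<Rightarrow> pt" where
  "vel c s = vector_derivative c (at s)"

definition covd :: "real \<Rightarrow> real \<Rightarrow> (real \<Rightarrow> pt) \<Rightarrow> (real \<Rightarrow> pt) \<Rightarrow> real \<Rightarrow> pt" where
  "covd a b c V s = vector_derivative V (at s) + conn a b (c s) (vel c s) (V s)"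

definition covdn :: "real \<Rightarrow> real \<Rightarrow> nat \<Rightarrow> (real \<Rightarrow> pt) \<Rightarrow> (real \<Rightarrow> pt) \<Rightarrow> real \<Rightarrow> pt" where
  "covdn a b n c V = ((covd a b c) ^^ n) V"

text \<open>Riemann curvature: R(d_i,d_j)d_k = sum_l Rc l k i j d_l, with
  R(X,Y) = nabla_X nabla_Y - nabla_Y nabla_X - nabla_[X,Y].\<close>
definition Rc :: "real \<Rightarrow> real \<Rightarrow> 3 \<Rightarrow> 3 \<Rightarrow> 3 \<Rightarrow> 3 \<Rightarrow> pt \<Rightarrow> real" where
  "Rc a b l k i j p = pd (chr a b l j k) p i - pd (chr a b l i k) p j
     + (\<Sum>m\<in>UNIV. chr a b m j k p * chr a b l i m p - chr a b m i k p * chr a b l j m p)"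

definition curv :: "real \<Rightarrow> real \<Rightarrow> pt \<Rightarrow> pt \<Rightarrow> pt \<Rightarrow> pt \<Rightarrow> pt" where
  "curv a b p X Y Z = (\<chi> l. \<Sum>i\<in>UNIV. \<Sum>j\<in>UNIV. \<Sum>k\<in>UNIV.
      X$i * Y$j * Z$k * Rc a b l k i j p)"

definition smooth_on :: "real set \<Rightarrow> (real \<Rightarrow> pt) \<Rightarrow> bool" where
  "smooth_on I c \<longleftrightarrow> (\<forall>n. \<forall>s\<in>I. ((vel ^^ n) c) differentiable (at s))"

definition arclength_curve :: "real \<Rightarrow> real \<Rightarrow> real set \<Rightarrow> (real \<Rightarrow> pt) \<Rightarrow> bool" where
  "arclength_curve a b I c \<longleftrightarrow> smooth_on I c \<and> (\<forall>s\<in>I. c s \<in> bcv_dom a)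
     \<and> (\<forall>s\<in>I. gm a b (c s) (vel c s) (vel c s) = 1)"

definition open_interval :: "real set \<Rightarrow> bool" where
  "open_interval I \<longleftrightarrow> I \<noteq> {} \<and> open I \<and> is_interval I"

definition triharmonic :: "real \<Rightarrow> real \<Rightarrow> real set \<Rightarrow> (real \<Rightarrow> pt) \<Rightarrow> bool" where
  "triharmonic a b I c \<longleftrightarrow> (\<forall>s\<in>I. let T = vel c in
      covdn a b 5 c T s + curv a b (c s) (covdn a b 3 c T s) (T s) (T s)
        - curv a b (c s) (covdn a b 2 c T s) (covdn a b 1 c T s) (T s) = 0)"

definition frenet_helix :: "real \<Rightarrow> real \<Rightarrow> real set \<Rightarrow> (real \<Rightarrow> pt) \<Rightarrow> real \<Rightarrow> real
    \<Rightarrow> (real \<Rightarrow> pt) \<Rightarrow> (real \<Rightarrow> pt) \<Rightarrow> bool" where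
  "frenet_helix a b I c \<kappa> \<tau> N B \<longleftrightarrow> \<kappa> > 0 \<and>
     (\<forall>s\<in>I. N differentiable (at s) \<and> B differentiable (at s)) \<and>
     (\<forall>s\<in>I. gm a b (c s) (N s) (N s) = 1 \<and> gm a b (c s) (B s) (B s) = 1 \<and>
             gm a b (c s) (vel c s) (N s) = 0 \<and> gm a b (c s) (vel c s) (B s) = 0 \<and>
             gm a b (c s) (N s) (B s) = 0) \<and>
     (\<forall>s\<in>I. covd a b c (vel c) s = \<kappa> *\<^sub>R N s \<and>
             covd a b c N s = (- \<kappa>) *\<^sub>R vel c s + \<tau> *\<^sub>R B s \<and>
             covd a b c B s = (- \<tau>) *\<^sub>R N s)"

definition psi :: "real \<Rightarrow> pt \<Rightarrow> pt" where
  "psi t p = p + t *\<^sub>R E3"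

definition hopf_generator :: "real \<Rightarrow> real \<Rightarrow> real set \<Rightarrow> (real \<Rightarrow> pt) \<Rightarrow> bool" where
  "hopf_generator a b J al \<longleftrightarrow> open_interval J \<and> arclength_curve a b J al \<and>
     (\<forall>u\<in>J. gm a b (al u) (vel al u) E3 = 0)"

text \<open>c is a geodesic of the Hopf cylinder x(u,t) = psi_t(al u): c lies on it,
  c(s) = x(u s, v s), and nabla_T T is normal to the tangent plane, which at
  x(u,t) is spanned by d psi_t(al'(u)) = al'(u) and E3.\<close>
definition geodesic_of_hopf_cylinder :: "real \<Rightarrow> real \<Rightarrow> real set \<Rightarrow> (real \<Rightarrow> pt)
    \<Rightarrow> real set \<Rightarrow> (real \<Rightarrow> pt) \<Rightarrow> bool" where
  "geodesic_of_hopf_cylinder a b I c J al \<longleftrightarrow>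
     (\<exists>u v :: real \<Rightarrow> real. \<forall>s\<in>I.
        u differentiable (at s) \<and> v differentiable (at s) \<and> u s \<in> J \<and>
        c s = psi (v s) (al (u s)) \<and>
        gm a b (c s) (covd a b c (vel c) s) E3 = 0 \<and>
        gm a b (c s) (covd a b c (vel c) s) (vel al (u s)) = 0)"

end

theory Submission
  imports Defs
begin

text \<open>
  Write \<open>\<theta>X = g(X, E\<^sub>3)\<close> for the Frenet frame \<open>T, N, B\<close> of the helix. Since \<open>E\<^sub>3\<close> is a unit
  Killing field, \<open>\<theta>T' = \<kappa> \<theta>N\<close>, \<open>\<theta>B' = -\<tau> \<theta>N + g(B, \<nabla>\<^sub>T E\<^sub>3)\<close> and
  \<open>g(B, \<nabla>\<^sub>T E\<^sub>3)\<^sup>2 = (b\<^sup>2/4) \<theta>N\<^sup>2\<close>. With the explicit curvature tensor of \<open>M(a,b)\<close>, the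
  \<open>B\<close>-component of the triharmonic equation reads
  \<open>(4a - b\<^sup>2) \<theta>N ((2\<kappa>\<^sup>2 + \<tau>\<^sup>2) \<theta>B + \<kappa>\<tau> \<theta>T) = 0\<close> and the \<open>N\<close>-component is an algebraic
  relation between \<open>\<theta>T, \<theta>N, \<theta>B\<close>. Near a point where \<open>\<theta>N \<noteq> 0\<close> the second factor vanishes
  identically; differentiating it and combining with the other relations forces \<open>b = 0\<close> and then
  \<open>\<kappa>\<^sup>2 + \<tau>\<^sup>2 = 0\<close>, which is absurd. Hence \<open>\<theta>N = 0\<close>, the angle \<open>\<theta>T = c\<close> is constant, and
  \<open>c\<^sup>2 < 1\<close> because the fibres of \<open>E\<^sub>3\<close> are geodesics. Removing the vertical drift \<open>c s E\<^sub>3\<close> from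
  \<open>\<gamma>\<close> leaves a horizontal curve of constant speed \<open>\<surd>(1 - c\<^sup>2)\<close>; \<open>\<gamma>\<close> lies on the Hopf cylinder
  over it, and \<open>\<nabla>\<^sub>T T = \<kappa> N\<close> is orthogonal to both \<open>E\<^sub>3\<close> and \<open>T\<close>, i.e. normal to the cylinder.
\<close>

lemma theta_add: "theta a b p (U + V) = theta a b p U + theta a b p V"
  by (simp add: theta_def add_divide_distrib[symmetric] algebra_simps)

lemma theta_scaleR: "theta a b p (r *\<^sub>R U) = r * theta a b p U"
  by (simp add: theta_def algebra_simps)

lemma theta_minus: "theta a b p (- U) = - theta a b p U"
  using theta_scaleR[of a b p "-1" U] by simp

lemma theta_diff: "theta a b p (U - V) = theta a b p U - theta a b p V"
  using theta_add[of a b p U "- V"] by (simp add: theta_minus)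

lemma theta_zero: "theta a b p 0 = 0"
  by (simp add: theta_def)

lemma theta_E3: "theta a b p E3 = 1"
  by (simp add: theta_def E3_def axis_def)

lemma gm_commute: "gm a b p U V = gm a b p V U"
  by (simp add: gm_def algebra_simps)

lemma gm_add_left: "gm a b p (U + V) W = gm a b p U W + gm a b p V W"
  by (simp add: gm_def theta_add add_divide_distrib[symmetric] algebra_simps)

lemma gm_scaleR_left: "gm a b p (r *\<^sub>R U) W = r * gm a b p U W"
  by (simp add: gm_def theta_scaleR algebra_simps)

lemma gm_zero_left: "gm a b p 0 W = 0"
  by (simp add: gm_def theta_zero)

lemma gm_minus_left: "gm a b p (- U) W = - gm a b p U W"
  using gm_scaleR_left[of a b p "-1" U W] by simp

lemma gm_diff_left: "gm a b p (U - V) W = gm a b p U W - gm a b p V W"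
  using gm_add_left[of a b p U "- V" W] by (simp add: gm_minus_left)

lemma gm_E3_right: "gm a b p U E3 = theta a b p U"
  by (simp add: gm_def theta_E3) (simp add: E3_def axis_def)

lemma gm_add_right: "gm a b p W (U + V) = gm a b p W U + gm a b p W V"
  by (simp add: gm_commute[of a b p W] gm_add_left)

lemma gm_scaleR_right: "gm a b p W (r *\<^sub>R U) = r * gm a b p W U"
  by (simp add: gm_commute[of a b p W] gm_scaleR_left)

lemma gm_diff_right: "gm a b p W (U - V) = gm a b p W U - gm a b p W V"
  by (simp add: gm_commute[of a b p W] gm_diff_left)

lemma gm_E3_left: "gm a b p E3 U = theta a b p U"
  by (subst gm_commute) (rule gm_E3_right)

lemmas gm_linear = gm_add_left gm_add_right gm_diff_left gm_diff_right gm_scaleR_left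
  gm_scaleR_right gm_minus_left gm_zero_left

section \<open>Coordinate derivatives of the metric\<close>

text \<open>\<open>dlam a p v\<close>, \<open>dtheta a b p v U\<close> and \<open>dgm a b p v U V\<close> are the derivatives of
  \<open>lam a\<close>, \<open>theta a b _ U\<close> and \<open>gm a b _ U V\<close> at \<open>p\<close> in direction \<open>v\<close>; likewise \<open>dbcv_conn\<close>
  below for \<open>bcv_conn\<close>.\<close>

definition dlam :: "real \<Rightarrow> pt \<Rightarrow> pt \<Rightarrow> real" where
  "dlam a p v = 2 * a * (p$1 * v$1 + p$2 * v$2)"

definition dtheta :: "real \<Rightarrow> real \<Rightarrow> pt \<Rightarrow> pt \<Rightarrow> pt \<Rightarrow> real" where
  "dtheta a b p v U = (b/2) * ((v$2 * U$1 - v$1 * U$2) / lam a p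
     - (p$2 * U$1 - p$1 * U$2) * dlam a p v / (lam a p)^2)"

definition dgm :: "real \<Rightarrow> real \<Rightarrow> pt \<Rightarrow> pt \<Rightarrow> pt \<Rightarrow> pt \<Rightarrow> real" where
  "dgm a b p v U V = - 2 * (U$1 * V$1 + U$2 * V$2) * dlam a p v / (lam a p)^3
     + dtheta a b p v U * theta a b p V + theta a b p U * dtheta a b p v V"

lemma has_real_derivative_vec_nth:
  "(c has_vector_derivative v) F \<Longrightarrow> ((\<lambda>t. c t $ i) has_real_derivative v $ i) F"
  unfolding has_real_derivative_iff_has_vector_derivative
  by (rule bounded_linear.has_vector_derivative[OF bounded_linear_vec_nth])

lemma has_real_derivative_lam:
  assumes "(c has_vector_derivative v) (at s)"
  shows "((\<lambda>t. lam a (c t)) has_real_derivative dlam a (c s) v) (at s)"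
  unfolding lam_def dlam_def
  by (rule derivative_eq_intros has_real_derivative_vec_nth[OF assms] refl)+ simp

lemma has_real_derivative_theta:
  assumes c: "(c has_vector_derivative v) (at s)" and V: "(V has_vector_derivative V') (at s)"
    and l: "lam a (c s) \<noteq> 0"
  shows "((\<lambda>t. theta a b (c t) (V t)) has_real_derivative
    theta a b (c s) V' + dtheta a b (c s) v (V s)) (at s)"
  unfolding theta_def[abs_def] dtheta_def
  by (rule derivative_eq_intros has_real_derivative_vec_nth[OF c] has_real_derivative_vec_nth[OF V]
      has_real_derivative_lam[OF c] l refl)+
    (use l in \<open>simp add: field_simps power2_eq_square\<close>)

lemma has_real_derivative_gm:
  assumes c: "(c has_vector_derivative v) (at s)" and l: "lam a (c s) \<noteq> 0"
  shows "((\<lambda>t. gm a b (c t) U V) has_real_derivative dgm a b (c s) v U V) (at s)"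
proof -
  have th: "((\<lambda>t. theta a b (c t) W) has_real_derivative dtheta a b (c s) v W) (at s)" for W
    using has_real_derivative_theta[OF c has_vector_derivative_const l, of b W] by (simp add: theta_zero)
  show ?thesis
    unfolding gm_def[abs_def] dgm_def
    by (rule DERIV_cong, (rule derivative_eq_intros th has_real_derivative_lam[OF c] refl | simp add: l)+)
      (use l in \<open>simp add: field_simps eval_nat_numeral\<close>)
qed

lemma has_vector_derivative_line: "((\<lambda>h. p + h *\<^sub>R w) has_vector_derivative w) (at h)"
  by (rule derivative_eq_intros refl)+ simp

lemma pd_local:
  assumes "open S" "p \<in> S" "\<And>q. q \<in> S \<Longrightarrow> f q = g q"
  shows "pd f p i = pd g p i"
proof -
  have "((\<lambda>h. p + h *\<^sub>R axis i 1) \<longlongrightarrow> p + 0 *\<^sub>R axis i 1) (nhds 0)"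
    by (intro tendsto_intros filterlim_ident)
  then have lim: "filterlim (\<lambda>h. p + h *\<^sub>R axis i 1) (nhds p) (nhds 0)"
    by simp
  have "\<forall>\<^sub>F q in nhds p. q \<in> S"
    using assms(1,2) by (rule eventually_nhds_in_open)
  from eventually_compose_filterlim[OF this lim]
  have "\<forall>\<^sub>F h in nhds 0. p + h *\<^sub>R axis i 1 \<in> S" .
  then have "\<forall>\<^sub>F h in nhds 0. f (p + h *\<^sub>R axis i 1) = g (p + h *\<^sub>R axis i 1)"
    by eventually_elim (use assms(3) in auto)
  then show ?thesis unfolding pd_def by (rule deriv_cong_ev) simp
qed

lemma pd_gc: "lam a p \<noteq> 0 \<Longrightarrow> pd (gc a b i j) p l = dgm a b p (axis l 1) (axis i 1) (axis j 1)"
  unfolding pd_def gc_def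
  using has_real_derivative_gm[OF has_vector_derivative_line, of a p 0 "axis l 1" b]
  by (auto intro: DERIV_imp_deriv)

section \<open>The Levi-Civita connection\<close>

definition inv_gmat :: "real \<Rightarrow> real \<Rightarrow> pt \<Rightarrow> real^3^3" where
  "inv_gmat a b p = (let x = p$1; y = p$2; l = lam a p in
     vector [vector [l^2, 0, -(b/2)*y*l], vector [0, l^2, (b/2)*x*l],
             vector [-(b/2)*y*l, (b/2)*x*l, 1 + (b^2/4)*(x^2+y^2)]])"

lemma gmat_mult_inv_gmat: "lam a p \<noteq> 0 \<Longrightarrow> gmat a b p ** inv_gmat a b p = mat 1"
  by (simp add: vec_eq_iff matrix_matrix_mult_def sum_3 gmat_def gc_def gm_def theta_def
      inv_gmat_def Let_def mat_def forall_3 axis_def)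
    (simp add: divide_simps, simp add: algebra_simps power2_eq_square)

lemma matrix_inv_gmat:
  assumes "lam a p \<noteq> 0"
  shows "matrix_inv (gmat a b p) = inv_gmat a b p"
proof -
  let ?G = "gmat a b p" and ?H = "inv_gmat a b p"
  have GH: "?G ** ?H = mat 1" and HG: "?H ** ?G = mat 1"
    using gmat_mult_inv_gmat[OF assms] matrix_left_right_inverse by blast+
  have left_inv: "matrix_inv ?G ** ?G = mat 1"
    using someI[of "\<lambda>A. ?G ** A = mat 1 \<and> A ** ?G = mat 1", OF conjI[OF GH HG]]
    unfolding matrix_inv_def by blast
  have "matrix_inv ?G = matrix_inv ?G ** (?G ** ?H)"
    by (simp only: GH matrix_mul_rid)
  also have "\<dots> = ?H"
    by (simp only: matrix_mul_assoc left_inv matrix_mul_lid)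
  finally show ?thesis .
qed

definition christoffel_first_kind :: "real \<Rightarrow> real \<Rightarrow> pt \<Rightarrow> pt \<Rightarrow> pt \<Rightarrow> pt" where
  "christoffel_first_kind a b p X Y = (let x = p$1; y = p$2; l = lam a p in vector [
     (X$1*Y$1*(-(1/2)*a*b^2*x*y^2 - 2*a*x)
       + (X$1*Y$2 + X$2*Y$1)*((1/4)*a*b^2*x^2*y - (1/4)*a*b^2*y^3 - 2*a*y + (1/4)*b^2*y)
       + X$2*Y$2*((1/2)*a*b^2*x*y^2 + 2*a*x - (1/2)*b^2*x)) / l^3
       + (b/2)*(X$2*Y$3 + X$3*Y$2) / l^2,
     (X$1*Y$1*((1/2)*a*b^2*x^2*y + 2*a*y - (1/2)*b^2*y)
       + (X$1*Y$2 + X$2*Y$1)*(-(1/4)*a*b^2*x^3 + (1/4)*a*b^2*x*y^2 - 2*a*x + (1/4)*b^2*x)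
       + X$2*Y$2*(-(1/2)*a*b^2*x^2*y - 2*a*y)) / l^3
       - (b/2)*(X$1*Y$3 + X$3*Y$1) / l^2,
     (X$1*Y$1*(-a*b*x*y) + (X$1*Y$2 + X$2*Y$1)*((1/2)*a*b*x^2 - (1/2)*a*b*y^2) + X$2*Y$2*(a*b*x*y)) / l^2])"

lemma christoffel_first_kind_eq:
  assumes "lam a p \<noteq> 0"
  shows "(pd (gc a b j l) p i + pd (gc a b i l) p j - pd (gc a b i j) p l) / 2
    = christoffel_first_kind a b p (axis i 1) (axis j 1) $ l"
proof -
  have "\<forall>i j l. (pd (gc a b j l) p i + pd (gc a b i l) p j - pd (gc a b i j) p l) / 2
    = christoffel_first_kind a b p (axis i 1) (axis j 1) $ l"
    unfolding forall_3 pd_gc[OF assms]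
    by (intro conjI; simp add: christoffel_first_kind_def dgm_def dtheta_def dlam_def theta_def axis_def Let_def;
        (use assms in \<open>simp add: divide_simps\<close>)?; (unfold lam_def)?; algebra?)
  then show ?thesis by blast
qed

definition bcv_conn :: "real \<Rightarrow> real \<Rightarrow> pt \<Rightarrow> pt \<Rightarrow> pt \<Rightarrow> pt" where
  "bcv_conn a b p X Y = (let x = p$1; y = p$2; l = lam a p in vector [
     (-2*a*x*X$1*Y$1 + (b^2/4 - 2*a)*y*(X$1*Y$2 + X$2*Y$1) + (2*a - b^2/2)*x*X$2*Y$2) / l
       + (b/2)*(X$2*Y$3 + X$3*Y$2),
     ((2*a - b^2/2)*y*X$1*Y$1 + (b^2/4 - 2*a)*x*(X$1*Y$2 + X$2*Y$1) - 2*a*y*X$2*Y$2) / l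
       - (b/2)*(X$1*Y$3 + X$3*Y$1),
     ((a*b - b^3/4)*x*y*(X$1*Y$1 - X$2*Y$2) + (b^3/8 - a*b/2)*(x^2 - y^2)*(X$1*Y$2 + X$2*Y$1)) / l^2
       - (b^2/4)*(x*(X$1*Y$3 + X$3*Y$1) + y*(X$2*Y$3 + X$3*Y$2)) / l])"

lemma chr_eq_bcv_conn:
  assumes "lam a p \<noteq> 0"
  shows "chr a b k i j p = bcv_conn a b p (axis i 1) (axis j 1) $ k"
proof -
  have "chr a b k i j p = (\<Sum>l\<in>UNIV. inv_gmat a b p $ k $ l * christoffel_first_kind a b p (axis i 1) (axis j 1) $ l)"
    unfolding chr_def matrix_inv_gmat[OF assms] sum_distrib_left christoffel_first_kind_eq[OF assms, symmetric]
    by (rule sum.cong) (simp_all add: field_simps)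
  moreover have "\<forall>k i j. (\<Sum>l\<in>UNIV. inv_gmat a b p $ k $ l * christoffel_first_kind a b p (axis i 1) (axis j 1) $ l)
      = bcv_conn a b p (axis i 1) (axis j 1) $ k"
    unfolding forall_3
    by (intro conjI; simp add: sum_3 inv_gmat_def Let_def bcv_conn_def christoffel_first_kind_def axis_def;
        (use assms in \<open>simp add: field_simps\<close>)?; algebra?)
  ultimately show ?thesis by simp
qed

lemma conn_eq_bcv_conn:
  assumes "lam a p \<noteq> 0"
  shows "conn a b p X Y = bcv_conn a b p X Y"
  unfolding vec_eq_iff forall_3
  by (simp add: conn_def sum_3 chr_eq_bcv_conn[OF assms] bcv_conn_def axis_def Let_def)
    (use assms in \<open>simp add: field_simps\<close>)

lemma conn_add_right: "conn a b p X (U + V) = conn a b p X U + conn a b p X V"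
  by (simp add: conn_def vec_eq_iff sum.distrib[symmetric] algebra_simps)

lemma conn_scaleR_left: "conn a b p (r *\<^sub>R X) U = r *\<^sub>R conn a b p X U"
  by (simp add: conn_def vec_eq_iff sum_distrib_left algebra_simps)

lemma conn_scaleR_right: "conn a b p X (r *\<^sub>R U) = r *\<^sub>R conn a b p X U"
  by (simp add: conn_def vec_eq_iff sum_distrib_left algebra_simps)

lemma conn_E3:
  assumes "lam a p \<noteq> 0"
  shows "conn a b p X E3 = vector [(b/2) * X$2, -(b/2) * X$1, -(b^2/4) * (p$1 * X$1 + p$2 * X$2) / lam a p]"
  unfolding conn_eq_bcv_conn[OF assms] vec_eq_iff forall_3
  by (simp add: bcv_conn_def Let_def E3_def axis_def)

lemma conn_E3_E3:
  assumes "lam a p \<noteq> 0"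
  shows "conn a b p E3 E3 = 0"
  unfolding conn_E3[OF assms] by (simp add: vec_eq_iff forall_3 E3_def axis_def)

lemma gm_conn_E3:
  assumes "lam a p \<noteq> 0"
  shows "gm a b p V (conn a b p T E3) = (b/2) * (T$2 * V$1 - T$1 * V$2) / (lam a p)^2"
  unfolding conn_E3[OF assms]
  using assms by (simp add: gm_def theta_def field_simps) algebra

lemma theta_bcv_conn:
  assumes "lam a p \<noteq> 0"
  shows "theta a b p (bcv_conn a b p T V) = (a*b/2) * (((p$1)^2 - (p$2)^2) * (T$1*V$2 + T$2*V$1)
      - 2 * p$1 * p$2 * (T$1*V$1 - T$2*V$2)) / (lam a p)^2"
  by (simp add: theta_def bcv_conn_def Let_def) (simp add: field_simps assms, algebra)

lemma theta_conn:
  assumes "lam a p \<noteq> 0"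
  shows "theta a b p (conn a b p T V) + gm a b p V (conn a b p T E3) = dtheta a b p T V"
  unfolding gm_conn_E3[OF assms]
  unfolding conn_eq_bcv_conn[OF assms] theta_bcv_conn[OF assms]
  by (simp add: dtheta_def dlam_def field_simps assms) (unfold lam_def, algebra)

section \<open>The curvature tensor\<close>

definition dbcv_conn :: "real \<Rightarrow> real \<Rightarrow> pt \<Rightarrow> pt \<Rightarrow> pt \<Rightarrow> pt \<Rightarrow> pt" where
  "dbcv_conn a b p w X Y = (let x = p$1; y = p$2; l = lam a p; dl = dlam a p w in vector [
     (-2*a*w$1*X$1*Y$1 + (b^2/4 - 2*a)*w$2*(X$1*Y$2 + X$2*Y$1) + (2*a - b^2/2)*w$1*X$2*Y$2) / l
       - (-2*a*x*X$1*Y$1 + (b^2/4 - 2*a)*y*(X$1*Y$2 + X$2*Y$1) + (2*a - b^2/2)*x*X$2*Y$2) * dl / l^2,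
     ((2*a - b^2/2)*w$2*X$1*Y$1 + (b^2/4 - 2*a)*w$1*(X$1*Y$2 + X$2*Y$1) - 2*a*w$2*X$2*Y$2) / l
       - ((2*a - b^2/2)*y*X$1*Y$1 + (b^2/4 - 2*a)*x*(X$1*Y$2 + X$2*Y$1) - 2*a*y*X$2*Y$2) * dl / l^2,
     ((a*b - b^3/4)*(w$1*y + x*w$2)*(X$1*Y$1 - X$2*Y$2)
        + (b^3/8 - a*b/2)*(2*x*w$1 - 2*y*w$2)*(X$1*Y$2 + X$2*Y$1)) / l^2
       - 2 * ((a*b - b^3/4)*x*y*(X$1*Y$1 - X$2*Y$2) + (b^3/8 - a*b/2)*(x^2 - y^2)*(X$1*Y$2 + X$2*Y$1))
           * dl / l^3
       - (b^2/4)*(w$1*(X$1*Y$3 + X$3*Y$1) + w$2*(X$2*Y$3 + X$3*Y$2)) / l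
       + (b^2/4)*(x*(X$1*Y$3 + X$3*Y$1) + y*(X$2*Y$3 + X$3*Y$2)) * dl / l^2])"

lemma has_real_derivative_bcv_conn:
  assumes c: "(c has_vector_derivative v) (at s)" and l: "lam a (c s) \<noteq> 0"
  shows "((\<lambda>t. bcv_conn a b (c t) X Y $ k) has_real_derivative dbcv_conn a b (c s) v X Y $ k) (at s)"
proof -
  note c1 = has_real_derivative_vec_nth[OF c, of 1] and c2 = has_real_derivative_vec_nth[OF c, of 2]
  have "\<forall>k. ((\<lambda>t. bcv_conn a b (c t) X Y $ k) has_real_derivative dbcv_conn a b (c s) v X Y $ k) (at s)"
    unfolding forall_3 bcv_conn_def dbcv_conn_def Let_def vector_3
    by (intro conjI; (rule DERIV_cong,
          (rule derivative_eq_intros c1 c2 has_real_derivative_lam[OF c] refl | simp add: l)+,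
          use l in \<open>simp add: field_simps eval_nat_numeral\<close>))
  then show ?thesis by blast
qed

lemma pd_chr:
  assumes "lam a p \<noteq> 0"
  shows "pd (chr a b l j k) p i = dbcv_conn a b p (axis i 1) (axis j 1) (axis k 1) $ l"
proof -
  have "open {q. lam a q \<noteq> 0}"
    unfolding lam_def by (intro open_Collect_neq continuous_intros)
  then have "pd (chr a b l j k) p i = pd (\<lambda>q. bcv_conn a b q (axis j 1) (axis k 1) $ l) p i"
    by (rule pd_local) (use assms chr_eq_bcv_conn in auto)
  also have "\<dots> = dbcv_conn a b p (axis i 1) (axis j 1) (axis k 1) $ l"
    unfolding pd_def
    using has_real_derivative_bcv_conn[OF has_vector_derivative_line, of a p 0 "axis i 1"] assms
    by (auto intro: DERIV_imp_deriv)
  finally show ?thesis .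
qed

definition bcv_curv :: "real \<Rightarrow> real \<Rightarrow> pt \<Rightarrow> pt \<Rightarrow> pt \<Rightarrow> pt \<Rightarrow> pt" where
  "bcv_curv a b p X Y Z = (4*a - 3*b^2/4) *\<^sub>R (gm a b p Y Z *\<^sub>R X - gm a b p X Z *\<^sub>R Y)
     + (4*a - b^2) *\<^sub>R ((theta a b p X * theta a b p Z) *\<^sub>R Y - (theta a b p Y * theta a b p Z) *\<^sub>R X
        + (gm a b p X Z * theta a b p Y) *\<^sub>R E3 - (gm a b p Y Z * theta a b p X) *\<^sub>R E3)"

lemma Rc_eq_bcv_curv:
  assumes "lam a p \<noteq> 0"
  shows "Rc a b l k i j p = bcv_curv a b p (axis i 1) (axis j 1) (axis k 1) $ l"
proof -
  let ?R = "\<lambda>l k i j. bcv_curv a b p (axis i 1) (axis j 1) (axis k 1) $ l"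
  have Rc: "Rc a b l k i j p = dbcv_conn a b p (axis i 1) (axis j 1) (axis k 1) $ l
      - dbcv_conn a b p (axis j 1) (axis i 1) (axis k 1) $ l
      + (\<Sum>m\<in>UNIV. bcv_conn a b p (axis j 1) (axis k 1) $ m * bcv_conn a b p (axis i 1) (axis m 1) $ l
          - bcv_conn a b p (axis i 1) (axis k 1) $ m * bcv_conn a b p (axis j 1) (axis m 1) $ l)"
    for l k i j
    unfolding Rc_def pd_chr[OF assms] chr_eq_bcv_conn[OF assms] ..
  have "\<forall>l k. Rc a b l k 1 2 p = ?R l k 1 2 \<and> Rc a b l k 1 3 p = ?R l k 1 3 \<and> Rc a b l k 2 3 p = ?R l k 2 3"
    unfolding forall_3 Rc
    by (intro conjI; simp add: sum_3 dbcv_conn_def bcv_conn_def dlam_def bcv_curv_def gm_def theta_def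
          E3_def axis_def Let_def; (simp add: field_simps assms)?; (algebra | (unfold lam_def, algebra))?)
  moreover have "Rc a b l k j i p = - Rc a b l k i j p" and "Rc a b l k i i p = 0" for i j
    by (simp_all add: Rc_def sum_subtractf)
  moreover have "?R l k j i = - ?R l k i j" and "?R l k i i = 0" for i j
    by (simp_all add: bcv_curv_def algebra_simps)
  ultimately show ?thesis
    using exhaust_3[of i] exhaust_3[of j] by (elim disjE) (metis (no_types, lifting) minus_equation_iff)+
qed

lemma trilinear_expansion:
  fixes f :: "real^'n \<Rightarrow> real^'n \<Rightarrow> real^'n \<Rightarrow> 'a::real_vector"
  assumes "\<And>Y Z. linear (\<lambda>X. f X Y Z)" "\<And>X Z. linear (\<lambda>Y. f X Y Z)" "\<And>X Y. linear (\<lambda>Z. f X Y Z)"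
  shows "f X Y Z = (\<Sum>i\<in>UNIV. \<Sum>j\<in>UNIV. \<Sum>k\<in>UNIV. (X$i * Y$j * Z$k) *\<^sub>R f (axis i 1) (axis j 1) (axis k 1))"
proof -
  have expand: "g U = (\<Sum>i\<in>UNIV. U$i *\<^sub>R g (axis i 1))" if "linear g" for g :: "real^'n \<Rightarrow> 'a" and U
  proof -
    have "g U = g (\<Sum>i\<in>UNIV. U$i *\<^sub>R axis i 1)"
      using basis_expansion[of U] by (simp add: scalar_mult_eq_scaleR)
    then show ?thesis
      by (simp add: linear_sum[OF that] linear_scale[OF that] o_def)
  qed
  show ?thesis
    by (subst expand[OF assms(1)], subst expand[OF assms(2)], subst expand[OF assms(3)])
      (simp add: scaleR_sum_right mult.assoc)
qed

lemma linear_bcv_curv: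
  shows "linear (\<lambda>X. bcv_curv a b p X Y Z)" "linear (\<lambda>Y. bcv_curv a b p X Y Z)"
    "linear (\<lambda>Z. bcv_curv a b p X Y Z)"
  by (rule linearI; simp add: bcv_curv_def gm_linear theta_add theta_scaleR algebra_simps)+

lemma curv_eq_bcv_curv:
  assumes "lam a p \<noteq> 0"
  shows "curv a b p X Y Z = bcv_curv a b p X Y Z"
proof -
  have "curv a b p X Y Z = (\<Sum>i\<in>UNIV. \<Sum>j\<in>UNIV. \<Sum>k\<in>UNIV.
      (X$i * Y$j * Z$k) *\<^sub>R bcv_curv a b p (axis i 1) (axis j 1) (axis k 1))"
    unfolding curv_def vec_eq_iff sum_component vector_scaleR_component Rc_eq_bcv_curv[OF assms]
    by simp
  also have "\<dots> = bcv_curv a b p X Y Z"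
    by (rule trilinear_expansion[symmetric]) (fact linear_bcv_curv)+
  finally show ?thesis .
qed

lemma gm_bcv_curv:
  "gm a b p (bcv_curv a b p X Y Z) W =
   (4*a - 3*b^2/4) * (gm a b p Y Z * gm a b p X W - gm a b p X Z * gm a b p Y W)
   + (4*a - b^2) * (theta a b p X * theta a b p Z * gm a b p Y W - theta a b p Y * theta a b p Z * gm a b p X W
      + gm a b p X Z * theta a b p Y * theta a b p W - gm a b p Y Z * theta a b p X * theta a b p W)"
  by (simp add: bcv_curv_def gm_linear gm_E3_left algebra_simps)

lemma covd_cong:
  assumes "open S" "s \<in> S" "\<And>t. t \<in> S \<Longrightarrow> V t = W t"
  shows "covd a b c V s = covd a b c W s"
proof -
  have "\<forall>\<^sub>F t in nhds s. t \<in> UNIV \<longrightarrow> V t = W t"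
    using eventually_nhds_in_open[OF assms(1,2)] by eventually_elim (use assms(3) in auto)
  then have "vector_derivative V (at s) = vector_derivative W (at s)"
    by (rule vector_derivative_cong_eq) auto
  then show ?thesis
    using assms(2,3) by (simp add: covd_def)
qed

lemma covd_lincomb:
  assumes "open S" "s \<in> S" "\<And>t. t \<in> S \<Longrightarrow> V t = \<alpha> *\<^sub>R X t + \<beta> *\<^sub>R Y t"
    and "X differentiable (at s)" "Y differentiable (at s)"
  shows "covd a b c V s = \<alpha> *\<^sub>R covd a b c X s + \<beta> *\<^sub>R covd a b c Y s"
proof -
  have "((\<lambda>t. \<alpha> *\<^sub>R X t + \<beta> *\<^sub>R Y t) has_vector_derivative
      \<alpha> *\<^sub>R vector_derivative X (at s) + \<beta> *\<^sub>R vector_derivative Y (at s)) (at s)"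
    using assms(4,5) by (auto intro!: derivative_eq_intros simp: vector_derivative_works[symmetric])
  then have "vector_derivative (\<lambda>t. \<alpha> *\<^sub>R X t + \<beta> *\<^sub>R Y t) (at s)
      = \<alpha> *\<^sub>R vector_derivative X (at s) + \<beta> *\<^sub>R vector_derivative Y (at s)"
    by (rule vector_derivative_at)
  then have "covd a b c (\<lambda>t. \<alpha> *\<^sub>R X t + \<beta> *\<^sub>R Y t) s = \<alpha> *\<^sub>R covd a b c X s + \<beta> *\<^sub>R covd a b c Y s"
    by (simp add: covd_def conn_add_right conn_scaleR_right algebra_simps)
  moreover have "covd a b c V s = covd a b c (\<lambda>t. \<alpha> *\<^sub>R X t + \<beta> *\<^sub>R Y t) s"
    by (rule covd_cong[OF assms(1-3)])
  ultimately show ?thesis by simp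
qed

lemma covd_scaleR:
  assumes "open S" "s \<in> S" "\<And>t. t \<in> S \<Longrightarrow> V t = \<alpha> *\<^sub>R X t" "X differentiable (at s)"
  shows "covd a b c V s = \<alpha> *\<^sub>R covd a b c X s"
  using covd_lincomb[of S s V \<alpha> X 0 X] assms by simp

lemma has_real_derivative_theta_covd:
  assumes "c differentiable (at s)" "V differentiable (at s)" "lam a (c s) \<noteq> 0"
  shows "((\<lambda>t. theta a b (c t) (V t)) has_real_derivative
    theta a b (c s) (covd a b c V s) + gm a b (c s) (V s) (conn a b (c s) (vel c s) E3)) (at s)"
proof -
  have "((\<lambda>t. theta a b (c t) (V t)) has_real_derivative
      theta a b (c s) (vector_derivative V (at s)) + dtheta a b (c s) (vel c s) (V s)) (at s)"
    using assms by (intro has_real_derivative_theta) (auto simp: vel_def vector_derivative_works[symmetric])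
  then show ?thesis
    by (simp add: covd_def theta_add theta_conn[OF assms(3), symmetric] add.assoc)
qed

section \<open>Orthonormal frames\<close>

definition euclid_coords :: "real \<Rightarrow> real \<Rightarrow> pt \<Rightarrow> pt \<Rightarrow> pt" where
  "euclid_coords a b p U = vector [U$1 / lam a p, U$2 / lam a p, theta a b p U]"

lemma gm_eq_inner_euclid_coords: "gm a b p U V = euclid_coords a b p U \<bullet> euclid_coords a b p V"
  by (simp add: gm_def euclid_coords_def inner_vec_def sum_3 power2_eq_square add_divide_distrib)

lemma orthonormal_triple_component_sq:
  fixes u v w :: "real^3"
  assumes "u \<bullet> u = 1" "v \<bullet> v = 1" "w \<bullet> w = 1" "u \<bullet> v = 0" "u \<bullet> w = 0" "v \<bullet> w = 0"
  shows "(u$k)^2 + (v$k)^2 + (w$k)^2 = 1"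
proof -
  define M :: "real^3^3" where "M = vector [u, v, w]"
  have "M ** transpose M = mat 1"
    using assms
    by (simp add: M_def vec_eq_iff matrix_matrix_mult_def transpose_def mat_def forall_3 sum_3
        inner_vec_def) (simp add: mult.commute)
  then have "transpose M ** M = mat 1"
    using matrix_left_right_inverse by blast
  then have "(transpose M ** M) $ k $ k = 1"
    by (simp add: mat_def)
  then show ?thesis
    by (simp add: M_def matrix_matrix_mult_def transpose_def sum_3 power2_eq_square)
qed

lemma theta_orthonormal_frame:
  assumes "lam a p \<noteq> 0"
    and "gm a b p T T = 1" "gm a b p N N = 1" "gm a b p B B = 1"
    and "gm a b p T N = 0" "gm a b p T B = 0" "gm a b p N B = 0"
  shows "(theta a b p T)^2 + (theta a b p N)^2 + (theta a b p B)^2 = 1"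
  using orthonormal_triple_component_sq[of "euclid_coords a b p T" "euclid_coords a b p N"
      "euclid_coords a b p B" 3] assms
  by (simp add: gm_eq_inner_euclid_coords euclid_coords_def)

lemma gm_conn_E3_sq:
  assumes "lam a p \<noteq> 0" and "gm a b p T T = 1" "gm a b p B B = 1" "gm a b p T B = 0"
  shows "(gm a b p B (conn a b p T E3))^2 = (b^2/4) * (1 - (theta a b p T)^2 - (theta a b p B)^2)"
proof -
  let ?t = "euclid_coords a b p T" and ?b = "euclid_coords a b p B"
  have "?t \<bullet> ?t = 1" "?b \<bullet> ?b = 1" "?t \<bullet> ?b = 0"
    using assms(2-4) by (simp_all add: gm_eq_inner_euclid_coords)
  then have "(?t$2 * ?b$1 - ?t$1 * ?b$2)^2 = 1 - (?t$3)^2 - (?b$3)^2"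
    \<comment> \<open>Lagrange's identity\<close>
    by (simp add: inner_vec_def sum_3) algebra
  moreover have "(gm a b p B (conn a b p T E3))^2 = (b^2/4) * (?t$2 * ?b$1 - ?t$1 * ?b$2)^2"
    unfolding gm_conn_E3[OF assms(1)] using assms(1)
    by (simp add: euclid_coords_def field_simps power2_eq_square)
  ultimately show ?thesis
    by (simp add: euclid_coords_def)
qed

lemma bcv_curv_frame_equations:
  fixes \<kappa> \<tau> :: real
  assumes frame: "gm a b p T T = 1" "gm a b p N N = 1" "gm a b p B B = 1"
      "gm a b p T N = 0" "gm a b p T B = 0" "gm a b p N B = 0"
    and "\<kappa> \<noteq> 0"
    and eq: "(\<kappa> * (\<kappa>^2 + \<tau>^2)^2) *\<^sub>R N + bcv_curv a b p ((- \<kappa> * (\<kappa>^2 + \<tau>^2)) *\<^sub>R N) T T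
      - bcv_curv a b p ((- (\<kappa>^2)) *\<^sub>R T + (\<kappa> * \<tau>) *\<^sub>R B) (\<kappa> *\<^sub>R N) T = 0"
  shows "(4*a - b^2) * theta a b p N
      * ((2 * \<kappa>^2 + \<tau>^2) * theta a b p B + \<kappa> * \<tau> * theta a b p T) = 0"
    and "(\<kappa>^2 + \<tau>^2)^2 - (2 * \<kappa>^2 + \<tau>^2) * ((4*a - 3*b^2/4)
        - (4*a - b^2) * ((theta a b p T)^2 + (theta a b p N)^2))
      - \<kappa> * \<tau> * (4*a - b^2) * theta a b p T * theta a b p B = 0"
proof -
  have frame': "gm a b p N T = 0" "gm a b p B T = 0" "gm a b p B N = 0"
    using frame gm_commute by metis+
  note expand = gm_bcv_curv gm_add_left gm_diff_left gm_scaleR_left gm_scaleR_right gm_zero_left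
    frame frame' theta_add theta_scaleR
  from arg_cong[OF eq, of "\<lambda>v. gm a b p v B"]
  have "\<kappa> * ((4*a - b^2) * theta a b p N * ((2 * \<kappa>^2 + \<tau>^2) * theta a b p B + \<kappa> * \<tau> * theta a b p T)) = 0"
    by (simp only: expand) (simp add: algebra_simps power2_eq_square power3_eq_cube)
  then show "(4*a - b^2) * theta a b p N * ((2 * \<kappa>^2 + \<tau>^2) * theta a b p B + \<kappa> * \<tau> * theta a b p T) = 0"
    using \<open>\<kappa> \<noteq> 0\<close> by simp
  from arg_cong[OF eq, of "\<lambda>v. gm a b p v N"]
  have "\<kappa> * ((\<kappa>^2 + \<tau>^2)^2 - (2 * \<kappa>^2 + \<tau>^2) * ((4*a - 3*b^2/4) - (4*a - b^2) * ((theta a b p T)^2 + (theta a b p N)^2))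
      - \<kappa> * \<tau> * (4*a - b^2) * theta a b p T * theta a b p B) = 0"
    by (simp only: expand) algebra
  then show "(\<kappa>^2 + \<tau>^2)^2 - (2 * \<kappa>^2 + \<tau>^2) * ((4*a - 3*b^2/4) - (4*a - b^2) * ((theta a b p T)^2 + (theta a b p N)^2))
      - \<kappa> * \<tau> * (4*a - b^2) * theta a b p T * theta a b p B = 0"
    using \<open>\<kappa> \<noteq> 0\<close> by simp
qed

lemma helix_frame_equations_imp_theta_N_zero:
  fixes \<kappa> \<tau> h \<theta>T \<theta>N \<theta>B :: real
  assumes "\<kappa> > 0"
    and unit: "\<theta>T^2 + \<theta>N^2 + \<theta>B^2 = 1"
    and B_eq: "(2 * \<kappa>^2 + \<tau>^2) * \<theta>B + \<kappa> * \<tau> * \<theta>T = 0"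
    and N_eq: "(\<kappa>^2 + \<tau>^2)^2 - (2 * \<kappa>^2 + \<tau>^2) * ((4*a - 3*b^2/4) - (4*a - b^2) * (\<theta>T^2 + \<theta>N^2))
      - \<kappa> * \<tau> * (4*a - b^2) * \<theta>T * \<theta>B = 0"
    and dB_eq: "(2 * \<kappa>^2 + \<tau>^2) * (h - \<tau> * \<theta>N) + \<kappa>^2 * \<tau> * \<theta>N = 0"
    and h: "h^2 = (b^2/4) * (1 - \<theta>T^2 - \<theta>B^2)"
  shows "\<theta>N = 0"
proof (rule ccontr)
  assume "\<theta>N \<noteq> 0"
  define S Q where "S = \<kappa>^2 + \<tau>^2" and "Q = 2 * \<kappa>^2 + \<tau>^2"
  have S_sq: "S^2 = Q * b^2 / 4"
    using N_eq B_eq unit unfolding S_def Q_def by algebra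
  have "Q * h = \<tau> * S * \<theta>N"
    using dB_eq unfolding S_def Q_def by algebra
  moreover have "h^2 = (b^2/4) * \<theta>N^2"
    using h unit by algebra
  ultimately have "Q^2 * (b^2/4) * \<theta>N^2 = \<tau>^2 * S^2 * \<theta>N^2"
    by algebra
  with \<open>\<theta>N \<noteq> 0\<close> have "Q^2 * (b^2/4) = \<tau>^2 * S^2"
    by simp
  with S_sq have "Q * b^2 * (Q - \<tau>^2) = 0"
    by algebra
  moreover have "Q > 0" "Q - \<tau>^2 > 0"
    using \<open>\<kappa> > 0\<close> unfolding Q_def by (auto intro: add_pos_nonneg)
  ultimately have "S^2 = 0"
    using S_sq by simp
  moreover have "S > 0"
    using \<open>\<kappa> > 0\<close> unfolding S_def by (simp add: add_pos_nonneg)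
  ultimately show False
    by simp
qed

section \<open>Triharmonic Frenet helices\<close>

locale bcv_frenet_helix =
  fixes a b :: real and I :: "real set" and \<gamma> N B :: "real \<Rightarrow> pt" and \<kappa> \<tau> :: real
  assumes interval: "open_interval I"
    and arclength: "arclength_curve a b I \<gamma>"
    and helix: "frenet_helix a b I \<gamma> \<kappa> \<tau> N B"
begin

lemma open_I: "open I"
  using interval by (simp add: open_interval_def)

lemma kappa_pos: "\<kappa> > 0"
  using helix by (simp add: frenet_helix_def)

lemma lam_nonzero: "s \<in> I \<Longrightarrow> lam a (\<gamma> s) \<noteq> 0"
  using arclength by (auto simp: arclength_curve_def bcv_dom_def)

lemma helix_differentiable:
  assumes "s \<in> I"
  shows "\<gamma> differentiable (at s)" "vel \<gamma> differentiable (at s)"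
    "N differentiable (at s)" "B differentiable (at s)"
proof -
  have "(vel ^^ n) \<gamma> differentiable (at s)" for n
    using arclength assms by (simp add: arclength_curve_def smooth_on_def)
  from this[of 0] this[of 1] show "\<gamma> differentiable (at s)" "vel \<gamma> differentiable (at s)"
    by simp_all
  show "N differentiable (at s)" "B differentiable (at s)"
    using helix assms by (simp_all add: frenet_helix_def)
qed

lemma frame_orthonormal:
  assumes "s \<in> I"
  shows "gm a b (\<gamma> s) (vel \<gamma> s) (vel \<gamma> s) = 1" "gm a b (\<gamma> s) (N s) (N s) = 1"
    "gm a b (\<gamma> s) (B s) (B s) = 1" "gm a b (\<gamma> s) (vel \<gamma> s) (N s) = 0"
    "gm a b (\<gamma> s) (vel \<gamma> s) (B s) = 0" "gm a b (\<gamma> s) (N s) (B s) = 0"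
  using arclength helix assms by (simp_all add: arclength_curve_def frenet_helix_def)

lemma frenet_equations:
  assumes "s \<in> I"
  shows "covd a b \<gamma> (vel \<gamma>) s = \<kappa> *\<^sub>R N s"
    "covd a b \<gamma> N s = (- \<kappa>) *\<^sub>R vel \<gamma> s + \<tau> *\<^sub>R B s"
    "covd a b \<gamma> B s = (- \<tau>) *\<^sub>R N s"
  using helix assms by (simp_all add: frenet_helix_def)

lemma covdn_vel:
  assumes "s \<in> I"
  shows "covdn a b 1 \<gamma> (vel \<gamma>) s = \<kappa> *\<^sub>R N s" (is ?D1)
    and "covdn a b 2 \<gamma> (vel \<gamma>) s = (- (\<kappa>^2)) *\<^sub>R vel \<gamma> s + (\<kappa> * \<tau>) *\<^sub>R B s" (is ?D2)
    and "covdn a b 3 \<gamma> (vel \<gamma>) s = (- \<kappa> * (\<kappa>^2 + \<tau>^2)) *\<^sub>R N s" (is ?D3)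
    and "covdn a b 5 \<gamma> (vel \<gamma>) s = (\<kappa> * (\<kappa>^2 + \<tau>^2)^2) *\<^sub>R N s" (is ?D5)
proof -
  let ?S = "\<kappa>^2 + \<tau>^2"
  have d1: "covdn a b 1 \<gamma> (vel \<gamma>) t = \<kappa> *\<^sub>R N t" if "t \<in> I" for t
    using frenet_equations(1)[OF that] by (simp add: covdn_def)
  have d2: "covdn a b 2 \<gamma> (vel \<gamma>) t = (- (\<kappa>^2)) *\<^sub>R vel \<gamma> t + (\<kappa> * \<tau>) *\<^sub>R B t"
    if "t \<in> I" for t
  proof -
    have "covdn a b 2 \<gamma> (vel \<gamma>) t = covd a b \<gamma> (covdn a b 1 \<gamma> (vel \<gamma>)) t"
      by (simp add: covdn_def numeral_eq_Suc)
    also have "\<dots> = \<kappa> *\<^sub>R covd a b \<gamma> N t"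
      by (rule covd_scaleR[OF open_I that d1 helix_differentiable(3)[OF that]])
    finally show ?thesis
      by (simp add: frenet_equations(2)[OF that] vec_eq_iff power2_eq_square algebra_simps)
  qed
  have d3: "covdn a b 3 \<gamma> (vel \<gamma>) t = (- \<kappa> * ?S) *\<^sub>R N t"
    if "t \<in> I" for t
  proof -
    have "covdn a b 3 \<gamma> (vel \<gamma>) t = covd a b \<gamma> (covdn a b 2 \<gamma> (vel \<gamma>)) t"
      by (simp add: covdn_def numeral_eq_Suc)
    also have "\<dots> = (- (\<kappa>^2)) *\<^sub>R covd a b \<gamma> (vel \<gamma>) t + (\<kappa> * \<tau>) *\<^sub>R covd a b \<gamma> B t"
      by (rule covd_lincomb[OF open_I that d2 helix_differentiable(2,4)[OF that]])
    finally show ?thesis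
      by (simp add: frenet_equations(1,3)[OF that] vec_eq_iff power2_eq_square algebra_simps)
  qed
  have d4: "covdn a b 4 \<gamma> (vel \<gamma>) t = (\<kappa>^2 * ?S) *\<^sub>R vel \<gamma> t + (- \<kappa> * ?S * \<tau>) *\<^sub>R B t"
    if "t \<in> I" for t
  proof -
    have "covdn a b 4 \<gamma> (vel \<gamma>) t = covd a b \<gamma> (covdn a b 3 \<gamma> (vel \<gamma>)) t"
      by (simp add: covdn_def numeral_eq_Suc)
    also have "\<dots> = (- \<kappa> * ?S) *\<^sub>R covd a b \<gamma> N t"
      by (rule covd_scaleR[OF open_I that d3 helix_differentiable(3)[OF that]])
    finally show ?thesis
      by (simp add: frenet_equations(2)[OF that] vec_eq_iff power2_eq_square algebra_simps)
  qed
  have d5: "covdn a b 5 \<gamma> (vel \<gamma>) t = (\<kappa> * ?S^2) *\<^sub>R N t"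
    if "t \<in> I" for t
  proof -
    have "covdn a b 5 \<gamma> (vel \<gamma>) t = covd a b \<gamma> (covdn a b 4 \<gamma> (vel \<gamma>)) t"
      by (simp add: covdn_def numeral_eq_Suc)
    also have "\<dots> = (\<kappa>^2 * ?S) *\<^sub>R covd a b \<gamma> (vel \<gamma>) t + (- \<kappa> * ?S * \<tau>) *\<^sub>R covd a b \<gamma> B t"
      by (rule covd_lincomb[OF open_I that d4 helix_differentiable(2,4)[OF that]])
    finally show ?thesis
      by (simp add: frenet_equations(1,3)[OF that] vec_eq_iff power2_eq_square algebra_simps)
  qed
  show ?D1 ?D2 ?D3 ?D5
    using d1 d2 d3 d5 assms by auto
qed

lemma triharmonic_frame_equations:
  assumes "triharmonic a b I \<gamma>" "s \<in> I"
  shows "(4*a - b^2) * theta a b (\<gamma> s) (N s) * ((2 * \<kappa>^2 + \<tau>^2) * theta a b (\<gamma> s) (B s)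
      + \<kappa> * \<tau> * theta a b (\<gamma> s) (vel \<gamma> s)) = 0" (is ?B_component)
    and "(\<kappa>^2 + \<tau>^2)^2 - (2 * \<kappa>^2 + \<tau>^2) * ((4*a - 3*b^2/4)
        - (4*a - b^2) * ((theta a b (\<gamma> s) (vel \<gamma> s))^2 + (theta a b (\<gamma> s) (N s))^2))
      - \<kappa> * \<tau> * (4*a - b^2) * theta a b (\<gamma> s) (vel \<gamma> s) * theta a b (\<gamma> s) (B s) = 0"
      (is ?N_component)
proof -
  have "covdn a b 5 \<gamma> (vel \<gamma>) s + curv a b (\<gamma> s) (covdn a b 3 \<gamma> (vel \<gamma>) s) (vel \<gamma> s) (vel \<gamma> s)
      - curv a b (\<gamma> s) (covdn a b 2 \<gamma> (vel \<gamma>) s) (covdn a b 1 \<gamma> (vel \<gamma>) s) (vel \<gamma> s) = 0"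
    using assms unfolding triharmonic_def Let_def by blast
  then have E: "(\<kappa> * (\<kappa>^2 + \<tau>^2)^2) *\<^sub>R N s
      + bcv_curv a b (\<gamma> s) ((- \<kappa> * (\<kappa>^2 + \<tau>^2)) *\<^sub>R N s) (vel \<gamma> s) (vel \<gamma> s)
      - bcv_curv a b (\<gamma> s) ((- (\<kappa>^2)) *\<^sub>R vel \<gamma> s + (\<kappa> * \<tau>) *\<^sub>R B s) (\<kappa> *\<^sub>R N s) (vel \<gamma> s) = 0"
    unfolding covdn_vel[OF assms(2)] curv_eq_bcv_curv[OF lam_nonzero[OF assms(2)]] .
  show ?B_component ?N_component
    using bcv_curv_frame_equations[OF frame_orthonormal[OF assms(2)] _ E] kappa_pos by auto
qed

lemma has_real_derivative_theta_vel:
  assumes "s \<in> I"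
  shows "((\<lambda>t. theta a b (\<gamma> t) (vel \<gamma> t)) has_real_derivative \<kappa> * theta a b (\<gamma> s) (N s)) (at s)"
  using has_real_derivative_theta_covd[where b = b, OF helix_differentiable(1,2)[OF assms] lam_nonzero[OF assms]]
  by (simp add: frenet_equations(1)[OF assms] theta_scaleR gm_conn_E3[OF lam_nonzero[OF assms]])

lemma has_real_derivative_theta_binormal:
  assumes "s \<in> I"
  shows "((\<lambda>t. theta a b (\<gamma> t) (B t)) has_real_derivative
    - \<tau> * theta a b (\<gamma> s) (N s) + gm a b (\<gamma> s) (B s) (conn a b (\<gamma> s) (vel \<gamma> s) E3)) (at s)"
  using has_real_derivative_theta_covd[where b = b, OF helix_differentiable(1,4)[OF assms] lam_nonzero[OF assms]]
  by (simp add: frenet_equations(3)[OF assms] theta_minus theta_scaleR)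

lemma theta_normal_eq_0:
  assumes "triharmonic a b I \<gamma>" "4 * a \<noteq> b^2" "s \<in> I"
  shows "theta a b (\<gamma> s) (N s) = 0"
proof (rule ccontr)
  define \<theta>T \<theta>N \<theta>B where "\<theta>T t = theta a b (\<gamma> t) (vel \<gamma> t)" and "\<theta>N t = theta a b (\<gamma> t) (N t)"
    and "\<theta>B t = theta a b (\<gamma> t) (B t)" for t
  define h where "h = gm a b (\<gamma> s) (B s) (conn a b (\<gamma> s) (vel \<gamma> s) E3)"
  let ?Q = "2 * \<kappa>^2 + \<tau>^2"
  assume "theta a b (\<gamma> s) (N s) \<noteq> 0"
  then have "\<theta>N s \<noteq> 0"
    by (simp add: \<theta>N_def)
  have "continuous (at s) \<theta>N"
    using has_real_derivative_theta_covd[where b = b, OF helix_differentiable(1,3)[OF assms(3)] lam_nonzero[OF assms(3)]]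
    unfolding \<theta>N_def[abs_def] by (rule DERIV_continuous)
  then have "(\<theta>N \<longlongrightarrow> \<theta>N s) (at s)"
    by (simp add: continuous_at)
  then have "\<forall>\<^sub>F t in nhds s. \<theta>N t \<noteq> 0"
    using \<open>\<theta>N s \<noteq> 0\<close> by (simp add: eventually_nhds_conv_at tendsto_imp_eventually_ne)
  moreover have "\<forall>\<^sub>F t in nhds s. t \<in> I"
    using open_I assms(3) by (rule eventually_nhds_in_open)
  ultimately have locally_zero: "\<forall>\<^sub>F t in nhds s. ?Q * \<theta>B t + \<kappa> * \<tau> * \<theta>T t = 0"
    by eventually_elim
      (use triharmonic_frame_equations(1)[OF assms(1)] assms(2) in \<open>auto simp: \<theta>T_def \<theta>N_def \<theta>B_def\<close>)
  then have B_eq: "?Q * \<theta>B s + \<kappa> * \<tau> * \<theta>T s = 0"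
    by (rule eventually_nhds_x_imp_x)
  have "((\<lambda>t. ?Q * \<theta>B t + \<kappa> * \<tau> * \<theta>T t) has_real_derivative 0) (at s)"
    using DERIV_cong_ev[OF refl locally_zero refl] by simp
  moreover have "((\<lambda>t. ?Q * \<theta>B t + \<kappa> * \<tau> * \<theta>T t) has_real_derivative
      ?Q * (- \<tau> * \<theta>N s + h) + \<kappa> * \<tau> * (\<kappa> * \<theta>N s)) (at s)"
    unfolding \<theta>B_def[abs_def] \<theta>T_def[abs_def] \<theta>N_def h_def
    by (intro DERIV_add DERIV_cmult has_real_derivative_theta_binormal has_real_derivative_theta_vel assms(3))
  ultimately have "?Q * (- \<tau> * \<theta>N s + h) + \<kappa> * \<tau> * (\<kappa> * \<theta>N s) = 0"
    using DERIV_unique by blast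
  then have dB_eq: "?Q * (h - \<tau> * \<theta>N s) + \<kappa>^2 * \<tau> * \<theta>N s = 0"
    by algebra
  have "\<theta>N s = 0"
  proof (rule helix_frame_equations_imp_theta_N_zero[OF kappa_pos _ B_eq _ dB_eq])
    show "(\<theta>T s)^2 + (\<theta>N s)^2 + (\<theta>B s)^2 = 1"
      unfolding \<theta>T_def \<theta>N_def \<theta>B_def
      by (rule theta_orthonormal_frame[OF lam_nonzero frame_orthonormal]) (fact assms(3))+
    show "(\<kappa>^2 + \<tau>^2)^2 - ?Q * ((4*a - 3*b^2/4) - (4*a - b^2) * ((\<theta>T s)^2 + (\<theta>N s)^2))
      - \<kappa> * \<tau> * (4*a - b^2) * \<theta>T s * \<theta>B s = 0"
      unfolding \<theta>T_def \<theta>N_def \<theta>B_def by (rule triharmonic_frame_equations(2)[OF assms(1,3)])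
    show "h^2 = (b^2/4) * (1 - (\<theta>T s)^2 - (\<theta>B s)^2)"
      unfolding \<theta>T_def \<theta>B_def h_def
      by (rule gm_conn_E3_sq[OF lam_nonzero frame_orthonormal(1,3,5)]) (fact assms(3))+
  qed
  with \<open>\<theta>N s \<noteq> 0\<close> show False ..
qed

lemma theta_vel_constant:
  assumes "triharmonic a b I \<gamma>" "4 * a \<noteq> b^2"
  obtains c where "\<And>s. s \<in> I \<Longrightarrow> theta a b (\<gamma> s) (vel \<gamma> s) = c"
proof -
  have "convex I"
    using interval by (simp add: open_interval_def is_interval_convex)
  then have "\<exists>c. \<forall>s\<in>I. theta a b (\<gamma> s) (vel \<gamma> s) = c"
    using has_real_derivative_theta_vel theta_normal_eq_0[OF assms]
    by (intro has_field_derivative_zero_constant) (auto simp: has_field_derivative_at_within)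
  with that show ?thesis
    by blast
qed

lemma theta_vel_sq_less_1:
  assumes const: "\<And>s. s \<in> I \<Longrightarrow> theta a b (\<gamma> s) (vel \<gamma> s) = c"
  shows "c^2 < 1"
proof -
  obtain s0 where s0: "s0 \<in> I"
    using interval by (auto simp: open_interval_def)
  have "c^2 \<le> 1"
    using theta_orthonormal_frame[OF lam_nonzero[OF s0] frame_orthonormal[OF s0]] const[OF s0]
    by (smt (verit) zero_le_power2)
  moreover have "c^2 \<noteq> 1"
  proof
    assume "c^2 = 1"
    have vertical: "vel \<gamma> s = c *\<^sub>R E3" if "s \<in> I" for s
    proof -
      have "((vel \<gamma> s $ 1)^2 + (vel \<gamma> s $ 2)^2) / (lam a (\<gamma> s))^2 + c^2 = 1"
        using frame_orthonormal(1)[OF that] const[OF that] by (simp add: gm_def power2_eq_square)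
      then have "vel \<gamma> s $ 1 = 0" "vel \<gamma> s $ 2 = 0"
        using \<open>c^2 = 1\<close> lam_nonzero[OF that] by (simp_all add: add_nonneg_eq_0_iff)
      moreover have "vel \<gamma> s $ 3 = c"
        using const[OF that] calculation by (simp add: theta_def)
      ultimately show ?thesis
        by (simp add: vec_eq_iff forall_3 E3_def axis_def)
    qed
    have "\<kappa> *\<^sub>R N s0 = covd a b \<gamma> (\<lambda>t. c *\<^sub>R E3) s0"
      using frenet_equations(1)[OF s0] covd_cong[OF open_I s0 vertical] by simp
    also have "\<dots> = c^2 *\<^sub>R conn a b (\<gamma> s0) E3 E3"
      by (simp add: covd_def vertical[OF s0] conn_scaleR_left conn_scaleR_right power2_eq_square)
    also have "\<dots> = 0"
      by (simp add: conn_E3_E3[OF lam_nonzero[OF s0]])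
    finally have "N s0 = 0"
      using kappa_pos by simp
    then show False
      using frame_orthonormal(2)[OF s0] by (simp add: gm_zero_left)
  qed
  ultimately show ?thesis
    by simp
qed

end

section \<open>Geodesics of Hopf cylinders\<close>

lemma lam_vertical_shift: "lam a (p - t *\<^sub>R E3) = lam a p"
  by (simp add: lam_def E3_def axis_def)

lemma gm_vertical_shift: "gm a b (p - t *\<^sub>R E3) = gm a b p"
  by (simp add: fun_eq_iff gm_def theta_def lam_vertical_shift) (simp add: E3_def axis_def)

lemma has_vector_derivative_scaled_arg:
  assumes "G differentiable (at (k * u))"
  shows "((\<lambda>u. G (k * u)) has_vector_derivative k *\<^sub>R vel G (k * u)) (at u)"
proof -
  have "((\<lambda>u. k * u) has_vector_derivative k) (at u)"
    using has_vector_derivative_mult_right[OF has_vector_derivative_id, of k "at u"] by simp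
  moreover have "(G has_vector_derivative vel G (k * u)) (at (k * u))"
    using assms by (simp add: vel_def vector_derivative_works[symmetric])
  ultimately show ?thesis
    using vector_diff_chain_at by (auto simp: o_def)
qed

lemma vel_funpow_reparam:
  fixes \<gamma> :: "real \<Rightarrow> pt" and k m :: real and w :: pt
  assumes "open J" "\<And>u. u \<in> J \<Longrightarrow> k * u \<in> I" "smooth_on I \<gamma>"
  defines "\<alpha> \<equiv> \<lambda>u. \<gamma> (k * u) - (m * u) *\<^sub>R w"
  defines "F \<equiv> \<lambda>n u. if n = 0 then \<alpha> u
    else k^n *\<^sub>R (vel ^^ n) \<gamma> (k * u) - (if n = 1 then m *\<^sub>R w else 0)"
  shows "smooth_on J \<alpha>" and "\<And>n u. u \<in> J \<Longrightarrow> (vel ^^ n) \<alpha> u = F n u"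
proof -
  have smooth: "(vel ^^ n) \<gamma> differentiable (at (k * u))" if "u \<in> J" for n u
    using assms(2,3) that by (simp add: smooth_on_def)
  have F_deriv: "(F n has_vector_derivative F (Suc n) u) (at u)" if "u \<in> J" for n u
  proof (cases "n = 0")
    case True
    have "((\<lambda>u. \<gamma> (k * u) - (m * u) *\<^sub>R w) has_vector_derivative k *\<^sub>R vel \<gamma> (k * u) - m *\<^sub>R w) (at u)"
      using smooth[OF that, of 0]
      by (auto intro!: derivative_eq_intros has_vector_derivative_scaled_arg)
    then show ?thesis
      using True by (simp add: F_def \<alpha>_def[abs_def])
  next
    case False
    have "((\<lambda>u. k^n *\<^sub>R (vel ^^ n) \<gamma> (k * u) - (if n = 1 then m *\<^sub>R w else 0)) has_vector_derivative
        (k^n * k) *\<^sub>R vel ((vel ^^ n) \<gamma>) (k * u)) (at u)"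
      using smooth[OF that, of n]
      by (auto intro!: derivative_eq_intros has_vector_derivative_scaled_arg)
    moreover have "F n = (\<lambda>u. k^n *\<^sub>R (vel ^^ n) \<gamma> (k * u) - (if n = 1 then m *\<^sub>R w else 0))"
      using False by (simp add: F_def fun_eq_iff)
    ultimately show ?thesis
      using False by (simp add: F_def mult.commute)
  qed
  show vel_F: "(vel ^^ n) \<alpha> u = F n u" if "u \<in> J" for n u
    using that
  proof (induction n arbitrary: u)
    case 0
    then show ?case by (simp add: F_def)
  next
    case (Suc n)
    have "\<forall>\<^sub>F t in nhds u. t \<in> UNIV \<longrightarrow> (vel ^^ n) \<alpha> t = F n t"
      using eventually_nhds_in_open[OF assms(1) Suc.prems] by eventually_elim (use Suc.IH in auto)
    then have "vel ((vel ^^ n) \<alpha>) u = vector_derivative (F n) (at u)"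
      unfolding vel_def by (rule vector_derivative_cong_eq) auto
    then show ?case
      using vector_derivative_at[OF F_deriv[OF Suc.prems]] by simp
  qed
  show "smooth_on J \<alpha>"
    unfolding smooth_on_def
  proof (intro allI ballI)
    fix n u assume "u \<in> J"
    have "((vel ^^ n) \<alpha> has_vector_derivative F (Suc n) u) (at u)"
      using F_deriv[OF \<open>u \<in> J\<close>, of n] assms(1) \<open>u \<in> J\<close>
      by (rule has_vector_derivative_transform_within_open) (simp add: vel_F)
    then show "(vel ^^ n) \<alpha> differentiable (at u)"
      by (rule differentiableI_vector)
  qed
qed

lemma constant_angle_imp_hopf_cylinder_geodesic:
  assumes I: "open_interval I" and \<gamma>: "arclength_curve a b I \<gamma>"
    and const: "\<And>s. s \<in> I \<Longrightarrow> theta a b (\<gamma> s) (vel \<gamma> s) = c" and "c^2 < 1"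
    and perp_E3: "\<And>s. s \<in> I \<Longrightarrow> gm a b (\<gamma> s) (covd a b \<gamma> (vel \<gamma>) s) E3 = 0"
    and perp_vel: "\<And>s. s \<in> I \<Longrightarrow> gm a b (\<gamma> s) (covd a b \<gamma> (vel \<gamma>) s) (vel \<gamma> s) = 0"
  shows "\<exists>J \<alpha>. hopf_generator a b J \<alpha> \<and> geodesic_of_hopf_cylinder a b I \<gamma> J \<alpha>"
proof -
  \<comment> \<open>\<open>vel \<gamma> - c E3\<close> is horizontal of length \<open>\<sigma>\<close>\<close>
  define \<sigma> where "\<sigma> = sqrt (1 - c^2)"
  have "\<sigma> > 0" "\<sigma>^2 = 1 - c^2"
    using \<open>c^2 < 1\<close> by (simp_all add: \<sigma>_def)
  define \<alpha> where "\<alpha> u = \<gamma> (u / \<sigma>) - (c / \<sigma> * u) *\<^sub>R E3" for u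
  define J where "J = (*\<^sub>R) \<sigma> ` I"
  have I_props: "open I" "is_interval I" "I \<noteq> {}"
    using I by (simp_all add: open_interval_def)
  have J_iff: "u \<in> J \<longleftrightarrow> u / \<sigma> \<in> I" for u
    using \<open>\<sigma> > 0\<close> unfolding J_def by (auto simp: image_iff intro: bexI[of _ "u / \<sigma>"])
  have "open J"
    using open_scaling[OF _ I_props(1), of \<sigma>] \<open>\<sigma> > 0\<close> by (simp add: J_def)
  have "is_interval J"
    using convex_scaling[of I \<sigma>] I_props(2) by (simp add: J_def is_interval_convex_1)
  have "J \<noteq> {}"
    using I_props(3) by (simp add: J_def)
  have \<gamma>_smooth: "smooth_on I \<gamma>"
    using \<gamma> by (simp add: arclength_curve_def)
  have \<alpha>_eq: "\<alpha> = (\<lambda>u. \<gamma> ((1 / \<sigma>) * u) - ((c / \<sigma>) * u) *\<^sub>R E3)"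
    by (simp add: \<alpha>_def fun_eq_iff)
  note reparam = vel_funpow_reparam[where k = "1 / \<sigma>" and m = "c / \<sigma>" and w = E3,
      OF \<open>open J\<close> _ \<gamma>_smooth, folded \<alpha>_eq]
  have \<alpha>_smooth: "smooth_on J \<alpha>"
    by (rule reparam(1)) (simp add: J_iff)
  have vel_\<alpha>: "vel \<alpha> u = (1 / \<sigma>) *\<^sub>R (vel \<gamma> (u / \<sigma>) - c *\<^sub>R E3)" if "u \<in> J" for u
    using reparam(2)[of u 1] that by (simp add: J_iff algebra_simps)
  have hopf: "hopf_generator a b J \<alpha>"
    unfolding hopf_generator_def open_interval_def arclength_curve_def
  proof (intro conjI ballI)
    show "J \<noteq> {}" "open J" "is_interval J" "smooth_on J \<alpha>"
      by fact+
  next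
    fix u assume "u \<in> J"
    then have s: "u / \<sigma> \<in> I"
      by (simp add: J_iff)
    show "\<alpha> u \<in> bcv_dom a"
      using \<gamma> s by (simp add: arclength_curve_def bcv_dom_def \<alpha>_def lam_vertical_shift)
    have unit: "gm a b (\<gamma> (u / \<sigma>)) (vel \<gamma> (u / \<sigma>)) (vel \<gamma> (u / \<sigma>)) = 1"
      using \<gamma> s by (simp add: arclength_curve_def)
    show "gm a b (\<alpha> u) (vel \<alpha> u) (vel \<alpha> u) = 1"
      using unit const[OF s] \<open>\<sigma>^2 = 1 - c^2\<close> \<open>\<sigma> > 0\<close>
      by (simp add: \<alpha>_def gm_vertical_shift vel_\<alpha>[OF \<open>u \<in> J\<close>] gm_linear gm_E3_left gm_E3_right
          theta_E3 theta_diff theta_scaleR power2_eq_square field_simps)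
    show "gm a b (\<alpha> u) (vel \<alpha> u) E3 = 0"
      using const[OF s]
      by (simp add: \<alpha>_def gm_vertical_shift vel_\<alpha>[OF \<open>u \<in> J\<close>] gm_E3_right theta_scaleR theta_diff theta_E3)
  qed
  have "geodesic_of_hopf_cylinder a b I \<gamma> J \<alpha>"
    unfolding geodesic_of_hopf_cylinder_def
  proof (intro exI ballI conjI)
    fix s assume "s \<in> I"
    have "\<sigma> * s \<in> J"
      using \<open>s \<in> I\<close> \<open>\<sigma> > 0\<close> by (simp add: J_iff)
    show "(\<lambda>s. \<sigma> * s) differentiable (at s)" "(\<lambda>s. c * s) differentiable (at s)"
      by (intro derivative_intros)+
    show "\<sigma> * s \<in> J"
      by fact
    show "\<gamma> s = psi (c * s) (\<alpha> (\<sigma> * s))"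
      using \<open>\<sigma> > 0\<close> by (simp add: psi_def \<alpha>_def)
    show "gm a b (\<gamma> s) (covd a b \<gamma> (vel \<gamma>) s) E3 = 0"
      by (rule perp_E3) fact
    show "gm a b (\<gamma> s) (covd a b \<gamma> (vel \<gamma>) s) (vel \<alpha> (\<sigma> * s)) = 0"
      using perp_E3[OF \<open>s \<in> I\<close>] perp_vel[OF \<open>s \<in> I\<close>] \<open>\<sigma> > 0\<close>
      by (simp add: vel_\<alpha>[OF \<open>\<sigma> * s \<in> J\<close>] gm_linear)
  qed
  with hopf show ?thesis
    by blast
qed

theorem corollary4p8:
  fixes a b \<kappa> \<tau> :: real and I :: "real set" and \<gamma> N B :: "real \<Rightarrow> real^3"
  assumes "4 * a \<noteq> b^2"
    and "open_interval I"
    and "arclength_curve a b I \<gamma>"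
    and "triharmonic a b I \<gamma>"
    and "frenet_helix a b I \<gamma> \<kappa> \<tau> N B"
    and "\<tau> \<noteq> 0"
  shows "\<exists>J al. hopf_generator a b J al \<and> geodesic_of_hopf_cylinder a b I \<gamma> J al"
proof -
  interpret bcv_frenet_helix a b I \<gamma> N B \<kappa> \<tau>
    using assms(2,3,5) by unfold_locales
  obtain c where c: "\<And>s. s \<in> I \<Longrightarrow> theta a b (\<gamma> s) (vel \<gamma> s) = c"
    using theta_vel_constant[OF assms(4,1)] by blast
  show ?thesis
  proof (rule constant_angle_imp_hopf_cylinder_geodesic[OF assms(2,3) c theta_vel_sq_less_1[OF c]])
    fix s assume "s \<in> I"
    show "gm a b (\<gamma> s) (covd a b \<gamma> (vel \<gamma>) s) E3 = 0"
      using theta_normal_eq_0[OF assms(4,1) \<open>s \<in> I\<close>]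
      by (simp add: frenet_equations(1)[OF \<open>s \<in> I\<close>] gm_E3_right theta_scaleR)
    show "gm a b (\<gamma> s) (covd a b \<gamma> (vel \<gamma>) s) (vel \<gamma> s) = 0"
      using frame_orthonormal(4)[OF \<open>s \<in> I\<close>]
      by (simp add: frenet_equations(1)[OF \<open>s \<in> I\<close>] gm_scaleR_left gm_commute[of _ _ _ "N s"])
  qed
qed

end
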